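(* Let $B\subseteq\mathcal{SC}\times\mathcal{SC}$ and let $\rho,\sigma_1,\sigma_2\in\mathcal{SC}$ all be stable, with $\rho\dashv_B\sigma_1$ and $\sigma_1\sqsubseteq_B\sigma_2$. If $\rho\|\sigma_2\xrightarrow{\tau}_B$ (i.e. $\rho\|\sigma_2$ has some $\tau$-move), then $\rho\|\sigma_1\xrightarrow{\tau}_B$.
   Context: Fix base types $BT$ with preorder $\leq_{\mathsf b}$ and labels $\mathcal L$. Contract terms: $\sigma::=\mathbf 1\mid ?\mathtt t.\sigma\mid !\mathtt t.\sigma\mid !(\sigma).\sigma\mid ?(\sigma).\sigma\mid \sum_{i\in I}?l_i.\sigma_i\mid \bigoplus_{i\in I}!l_i.\sigma_i\mid \mu x.\sigma\mid x$ ($I$ finite nonempty, labels distinct). $\mathcal{SC}$ = closed guarded terms. LTS: $\mathbf 1\xrightarrow\checkmark$; $\lambda.\sigma\xrightarrow\lambda\sigma$ for prefixes (including $!l.\sigma$); $\bigoplus_{i\in I}!l_i.\sigma_i\xrightarrow\tau!l_i.\sigma_i$ for $|I|>1$; $\sum ?l_i.\sigma_i\xrightarrow{?l_i}\sigma_i$; $\mu x.\sigma\xrightarrow\tau\sigma[\mu x.\sigma/x]$. A contract is stable if it has no $\tau$-transition. $\lambda_1\bowtie_B\lambda_2$ iff the pair is $(!l,?l)$, $(?l,!l)$, $(!\mathtt t_1,?\mathtt t_2)$ with $\mathtt t_1\leq_{\mathsf b}\mathtt t_2$, $(?\mathtt t_1,!\mathtt t_2)$ with $\mathtt t_2\leq_{\mathsf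 b}\mathtt t_1$, $(!(\sigma_1),?(\sigma_2))$ with $\sigma_1B\sigma_2$, $(?(\sigma_1),!(\sigma_2))$ with $\sigma_2B\sigma_1$. $\rho\|\sigma\xrightarrow\tau_B$ by a $\tau$ of either side, or $\rho\|\sigma\xrightarrow\tau_B\rho'\|\sigma'$ if $\rho\xrightarrow{\lambda_1}\rho'$, $\sigma\xrightarrow{\lambda_2}\sigma'$, $\lambda_1\bowtie_B\lambda_2$. $\dashv_B$: greatest $R$ with $\rho R\sigma$ implying (i) if $\rho\|\sigma$ has no $\xrightarrow\tau_B$ move then $\rho\xrightarrow\checkmark$ and $\sigma\xrightarrow\checkmark$; (ii) every $\rho\|\sigma\xrightarrow\tau_B\rho'\|\sigma'$ has $\rho'R\sigma'$. $\sigma_1\sqsubseteq_B\sigma_2$ iff for all $\rho\in\mathcal{SC}$, $\rho\dashv_B\sigma_1$ implies $\rho\dashv_B\sigma_2$. *)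

theory Defs
  imports Main
begin

text \<open>Base types: type variable 'b (preorder given as a parameter leb);
labels: type variable 'l; recursion variables: nat.
Prefixes !l.s and ?l.s are the singleton internal / external choices.\<close>

datatype ('b, 'l) ctr =
    One
  | InT 'b "('b, 'l) ctr"
  | OutT 'b "('b, 'l) ctr"
  | OutD "('b, 'l) ctr" "('b, 'l) ctr"
  | InD "('b, 'l) ctr" "('b, 'l) ctr"
  | ExtCh "('l \<times> ('b, 'l) ctr) list"
  | IntCh "('l \<times> ('b, 'l) ctr) list"
  | Mu nat "('b, 'l) ctr"
  | Var nat

inductive free :: "nat \<Rightarrow> ('b, 'l) ctr \<Rightarrow> bool" where
  "free x (Var x)"
| "free x s \<Longrightarrow> free x (InT t s)"
| "free x s \<Longrightarrow> free x (OutT t s)"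
| "free x d \<Longrightarrow> free x (OutD d s)"
| "free x s \<Longrightarrow> free x (OutD d s)"
| "free x d \<Longrightarrow> free x (InD d s)"
| "free x s \<Longrightarrow> free x (InD d s)"
| "(l, s) \<in> set xs \<Longrightarrow> free x s \<Longrightarrow> free x (ExtCh xs)"
| "(l, s) \<in> set xs \<Longrightarrow> free x s \<Longrightarrow> free x (IntCh xs)"
| "free x s \<Longrightarrow> x \<noteq> y \<Longrightarrow> free x (Mu y s)"

inductive unguarded :: "nat \<Rightarrow> ('b, 'l) ctr \<Rightarrow> bool" where
  "unguarded x (Var x)"
| "unguarded x s \<Longrightarrow> x \<noteq> y \<Longrightarrow> unguarded x (Mu y s)"

inductive wf :: "('b, 'l) ctr \<Rightarrow> bool" where
  "wf One"
| "wf s \<Longrightarrow> wf (InT t s)"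
| "wf s \<Longrightarrow> wf (OutT t s)"
| "wf d \<Longrightarrow> wf s \<Longrightarrow> wf (OutD d s)"
| "wf d \<Longrightarrow> wf s \<Longrightarrow> wf (InD d s)"
| "xs \<noteq> [] \<Longrightarrow> distinct (map fst xs) \<Longrightarrow> (\<forall>p \<in> set xs. wf (snd p)) \<Longrightarrow> wf (ExtCh xs)"
| "xs \<noteq> [] \<Longrightarrow> distinct (map fst xs) \<Longrightarrow> (\<forall>p \<in> set xs. wf (snd p)) \<Longrightarrow> wf (IntCh xs)"
| "wf s \<Longrightarrow> \<not> unguarded x s \<Longrightarrow> wf (Mu x s)"
| "wf (Var x)"

definition SC :: "('b, 'l) ctr set" where
  "SC = {s. wf s \<and> (\<forall>x. \<not> free x s)}"

text \<open>Substitution s[t/x] (used only with closed t, so no capture).\<close>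
fun subst :: "nat \<Rightarrow> ('b, 'l) ctr \<Rightarrow> ('b, 'l) ctr \<Rightarrow> ('b, 'l) ctr" where
  "subst x t One = One"
| "subst x t (InT b s) = InT b (subst x t s)"
| "subst x t (OutT b s) = OutT b (subst x t s)"
| "subst x t (OutD d s) = OutD (subst x t d) (subst x t s)"
| "subst x t (InD d s) = InD (subst x t d) (subst x t s)"
| "subst x t (ExtCh xs) = ExtCh (map (\<lambda>p. (fst p, subst x t (snd p))) xs)"
| "subst x t (IntCh xs) = IntCh (map (\<lambda>p. (fst p, subst x t (snd p))) xs)"
| "subst x t (Mu y s) = (if x = y then Mu y s else Mu y (subst x t s))"
| "subst x t (Var y) = (if x = y then t else Var y)"

datatype ('b, 'l) act =
    Tick | Tau
  | InB 'b | OutB 'b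
  | InS "('b, 'l) ctr" | OutS "('b, 'l) ctr"
  | InL 'l | OutL 'l

inductive lts :: "('b, 'l) ctr \<Rightarrow> ('b, 'l) act \<Rightarrow> ('b, 'l) ctr \<Rightarrow> bool" where
  tick: "lts One Tick One"
| inT: "lts (InT t s) (InB t) s"
| outT: "lts (OutT t s) (OutB t) s"
| outD: "lts (OutD d s) (OutS d) s"
| inD: "lts (InD d s) (InS d) s"
| outL: "lts (IntCh [(l, s)]) (OutL l) s"
| intch: "length xs > 1 \<Longrightarrow> (l, s) \<in> set xs \<Longrightarrow> lts (IntCh xs) Tau (IntCh [(l, s)])"
| extch: "(l, s) \<in> set xs \<Longrightarrow> lts (ExtCh xs) (InL l) s"
| unfold: "lts (Mu x s) Tau (subst x (Mu x s) s)"

definition stable :: "('b, 'l) ctr \<Rightarrow> bool" where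
  "stable s \<longleftrightarrow> \<not> (\<exists>s'. lts s Tau s')"

definition ticks :: "('b, 'l) ctr \<Rightarrow> bool" where
  "ticks s \<longleftrightarrow> (\<exists>s'. lts s Tick s')"

fun bowtie :: "('b \<Rightarrow> 'b \<Rightarrow> bool) \<Rightarrow> (('b, 'l) ctr \<times> ('b, 'l) ctr) set
      \<Rightarrow> ('b, 'l) act \<Rightarrow> ('b, 'l) act \<Rightarrow> bool" where
  "bowtie leb B (OutL l1) (InL l2) = (l1 = l2)"
| "bowtie leb B (InL l1) (OutL l2) = (l1 = l2)"
| "bowtie leb B (OutB t1) (InB t2) = leb t1 t2"
| "bowtie leb B (InB t1) (OutB t2) = leb t2 t1"
| "bowtie leb B (OutS s1) (InS s2) = ((s1, s2) \<in> B)"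
| "bowtie leb B (InS s1) (OutS s2) = ((s2, s1) \<in> B)"
| "bowtie leb B _ _ = False"

definition par_tau :: "('b \<Rightarrow> 'b \<Rightarrow> bool) \<Rightarrow> (('b, 'l) ctr \<times> ('b, 'l) ctr) set
      \<Rightarrow> ('b, 'l) ctr \<Rightarrow> ('b, 'l) ctr \<Rightarrow> ('b, 'l) ctr \<Rightarrow> ('b, 'l) ctr \<Rightarrow> bool" where
  "par_tau leb B r s r' s' \<longleftrightarrow>
     (lts r Tau r' \<and> s' = s) \<or> (lts s Tau s' \<and> r' = r) \<or>
     (\<exists>a1 a2. lts r a1 r' \<and> lts s a2 s' \<and> bowtie leb B a1 a2)"

definition par_can_tau :: "('b \<Rightarrow> 'b \<Rightarrow> bool) \<Rightarrow> (('b, 'l) ctr \<times> ('b, 'l) ctr) set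
      \<Rightarrow> ('b, 'l) ctr \<Rightarrow> ('b, 'l) ctr \<Rightarrow> bool" where
  "par_can_tau leb B r s \<longleftrightarrow> (\<exists>r' s'. par_tau leb B r s r' s')"

definition compl_rel :: "('b \<Rightarrow> 'b \<Rightarrow> bool) \<Rightarrow> (('b, 'l) ctr \<times> ('b, 'l) ctr) set
      \<Rightarrow> (('b, 'l) ctr \<Rightarrow> ('b, 'l) ctr \<Rightarrow> bool) \<Rightarrow> bool" where
  "compl_rel leb B R \<longleftrightarrow> (\<forall>r s. R r s \<longrightarrow>
      (\<not> par_can_tau leb B r s \<longrightarrow> ticks r \<and> ticks s) \<and>
      (\<forall>r' s'. par_tau leb B r s r' s' \<longrightarrow> R r' s'))"

definition complies :: "('b \<Rightarrow> 'b \<Rightarrow> bool) \<Rightarrow> (('b, 'l) ctr \<times> ('b, 'l) ctr) set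
      \<Rightarrow> ('b, 'l) ctr \<Rightarrow> ('b, 'l) ctr \<Rightarrow> bool" where
  "complies leb B r s \<longleftrightarrow> (\<exists>R. compl_rel leb B R \<and> R r s)"

definition refines :: "('b \<Rightarrow> 'b \<Rightarrow> bool) \<Rightarrow> (('b, 'l) ctr \<times> ('b, 'l) ctr) set
      \<Rightarrow> ('b, 'l) ctr \<Rightarrow> ('b, 'l) ctr \<Rightarrow> bool" where
  "refines leb B s1 s2 \<longleftrightarrow> (\<forall>r \<in> SC. complies leb B r s1 \<longrightarrow> complies leb B r s2)"

end

theory Submission
  imports Defs
begin

text \<open>If \<rho>\<parallel>\<sigma>1 were stuck, compliance would force \<rho> to tick, i.e. \<rho> = 1. But 1 only
performs \<checkmark>, which synchronises with nothing, so against the stable \<sigma>2 no \<tau>-move is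
possible either.\<close>

lemma lts_One_act: "lts One a s \<Longrightarrow> a = Tick"
  by (cases rule: lts.cases) auto

lemma ticks_iff_One: "ticks s \<longleftrightarrow> s = One"
  unfolding ticks_def by (auto elim: lts.cases intro: lts.tick)

lemma complies_stuck_ticks:
  assumes "complies leb B r s" and "\<not> par_can_tau leb B r s"
  shows "ticks r \<and> ticks s"
  using assms unfolding complies_def compl_rel_def by blast

lemma not_par_can_tau_One_stable:
  assumes "stable s"
  shows "\<not> par_can_tau leb B One s"
proof
  assume "par_can_tau leb B One s"
  then obtain r' s' where step: "par_tau leb B One s r' s'"
    unfolding par_can_tau_def by blast
  have "\<not> lts One Tau r'" using lts_One_act by blast
  moreover have "\<not> lts s Tau s'" using assms unfolding stable_def by blast
  moreover have "\<not> bowtie leb B a1 a2" if "lts One a1 r'" for a1 a2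
    using lts_One_act[OF that] by simp
  ultimately show False using step unfolding par_tau_def by blast
qed

theorem mainTheorem13:
  fixes leb :: "'b \<Rightarrow> 'b \<Rightarrow> bool"
    and B :: "(('b, 'l) ctr \<times> ('b, 'l) ctr) set"
    and \<rho> \<sigma>1 \<sigma>2 :: "('b, 'l) ctr"
  assumes "reflp leb" and "transp leb"
    and "B \<subseteq> SC \<times> SC"
    and "\<rho> \<in> SC" and "\<sigma>1 \<in> SC" and "\<sigma>2 \<in> SC"
    and "stable \<rho>" and "stable \<sigma>1" and "stable \<sigma>2"
    and "complies leb B \<rho> \<sigma>1"
    and "refines leb B \<sigma>1 \<sigma>2"
    and "par_can_tau leb B \<rho> \<sigma>2"
  shows "par_can_tau leb B \<rho> \<sigma>1"
proof (rule ccontr)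
  assume "\<not> par_can_tau leb B \<rho> \<sigma>1"
  with \<open>complies leb B \<rho> \<sigma>1\<close> have "\<rho> = One"
    using complies_stuck_ticks ticks_iff_One by blast
  with \<open>stable \<sigma>2\<close> \<open>par_can_tau leb B \<rho> \<sigma>2\<close> show False
    using not_par_can_tau_One_stable by blast
qed

end
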